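(* Let $n\geq 3$ be an integer and let $\mathcal{E}_n$ be the Fomin–Kirillov algebra over an algebraically closed field $k$. Then $\mathcal{E}_n$ admits no truncated point modules of degree greater than $1$; that is, $\mathcal{P}_d(\mathcal{E}_n)=\emptyset$ for every $d\geq 2$.
   Context: The Fomin–Kirillov algebra $\mathcal{E}_n$ is the graded $k$-algebra generated by elements $x_{ij}$, $1\leq i<j\leq n$, all of degree $1$, subject to the relations: $x_{ij}^2=0$ for all $i<j$; $x_{ij}x_{kl}-x_{kl}x_{ij}=0$ for all $i<j$, $k<l$ with $\{i,j\}\cap\{k,l\}=\emptyset$; $x_{ij}x_{jk}-x_{jk}x_{ik}-x_{ik}x_{ij}=0$ and $x_{jk}x_{ij}-x_{ik}x_{jk}-x_{ij}x_{ik}=0$ for all $i<j<k$. For a connected graded $k$-algebra $A=k\oplus A_1\oplus A_2\oplus\cdots$ generated in degree $1$, a degree-$d$ (or $d$-truncated) point module is a graded cyclic left $A$-module $M=M_0\oplus\cdots\oplus M_d$ generated in degree $0$ with Hilbert series $1+t+\cdots+t^d$ (each $M_i$ one-dimensional). $\mathcal{P}_d(A)$ denotes the space of $d$-truncated point modules of $A$. *)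

theory Defs
  imports "HOL-Computational_Algebra.Polynomial"
begin

definition alg_closed :: "'k::field itself \<Rightarrow> bool" where
  "alg_closed _ \<longleftrightarrow> (\<forall>p :: 'k poly. 0 < degree p \<longrightarrow> (\<exists>x. poly p x = 0))"

definition FK_gen :: "nat \<Rightarrow> nat \<times> nat \<Rightarrow> bool" where
  "FK_gen n g \<longleftrightarrow> 1 \<le> fst g \<and> fst g < snd g \<and> snd g \<le> n"

(* A graded vector space M = M_0 + ... + M_d with each M_m one-dimensional is,
   after choosing basis vectors e_m of M_m, the space of coefficient functions
   v :: nat => 'k supported in {0..d}.  A graded (degree-preserving) left action
   of a degree-1 generator g sends M_m to M_(m+1) (and M_d to 0); a linear map between
   one-dimensional spaces is a scalar, so the action of g is  e_m |-> a g m * e_(m+1). *)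
definition supp_le :: "nat \<Rightarrow> (nat \<Rightarrow> 'k::zero) \<Rightarrow> bool" where
  "supp_le d v \<longleftrightarrow> (\<forall>m>d. v m = 0)"

definition act :: "(nat \<times> nat \<Rightarrow> nat \<Rightarrow> 'k::field) \<Rightarrow> nat \<Rightarrow> nat \<times> nat
                    \<Rightarrow> (nat \<Rightarrow> 'k) \<Rightarrow> (nat \<Rightarrow> 'k)" where
  "act a d g v = (\<lambda>m. if 1 \<le> m \<and> m \<le> d then a g (m - 1) * v (m - 1) else 0)"

definition FK_relations :: "nat \<Rightarrow> nat \<Rightarrow> (nat \<times> nat \<Rightarrow> nat \<Rightarrow> 'k::field) \<Rightarrow> bool" where
  "FK_relations n d a \<longleftrightarrow>
     (\<forall>v. supp_le d v \<longrightarrow>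
       (\<forall>i j. 1 \<le> i \<and> i < j \<and> j \<le> n \<longrightarrow>
           (\<forall>m. act a d (i,j) (act a d (i,j) v) m = 0)) \<and>
       (\<forall>i j k l. 1 \<le> i \<and> i < j \<and> j \<le> n \<and> 1 \<le> k \<and> k < l \<and> l \<le> n
           \<and> {i,j} \<inter> {k,l} = {} \<longrightarrow>
           (\<forall>m. act a d (i,j) (act a d (k,l) v) m - act a d (k,l) (act a d (i,j) v) m = 0)) \<and>
       (\<forall>i j k. 1 \<le> i \<and> i < j \<and> j < k \<and> k \<le> n \<longrightarrow>
           (\<forall>m. act a d (i,j) (act a d (j,k) v) m - act a d (j,k) (act a d (i,k) v) m
             - act a d (i,k) (act a d (i,j) v) m = 0) \<and>
           (\<forall>m. act a d (j,k) (act a d (i,j) v) m - act a d (i,k) (act a d (j,k) v) m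
             - act a d (i,j) (act a d (i,k) v) m = 0)))"

inductive_set gen_by_deg0 :: "nat \<Rightarrow> nat \<Rightarrow> (nat \<times> nat \<Rightarrow> nat \<Rightarrow> 'k::field) \<Rightarrow> (nat \<Rightarrow> 'k) set"
  for n d a where
  base: "(\<lambda>m. if m = 0 then c else 0) \<in> gen_by_deg0 n d a"
| add: "v \<in> gen_by_deg0 n d a \<Longrightarrow> w \<in> gen_by_deg0 n d a \<Longrightarrow> (\<lambda>m. v m + w m) \<in> gen_by_deg0 n d a"
| step: "FK_gen n g \<Longrightarrow> v \<in> gen_by_deg0 n d a \<Longrightarrow> act a d g v \<in> gen_by_deg0 n d a"

(* d-truncated point module of E_n (with the chosen bases):
   a graded left E_n-module with Hilbert series 1 + t + ... + t^d, generated in degree 0. *)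
definition FK_point_module :: "nat \<Rightarrow> nat \<Rightarrow> (nat \<times> nat \<Rightarrow> nat \<Rightarrow> 'k::field) \<Rightarrow> bool" where
  "FK_point_module n d a \<longleftrightarrow> FK_relations n d a \<and>
     (\<forall>v. supp_le d v \<longrightarrow> v \<in> gen_by_deg0 n d a)"

definition point_modules :: "'k::field itself \<Rightarrow> nat \<Rightarrow> nat \<Rightarrow> (nat \<times> nat \<Rightarrow> nat \<Rightarrow> 'k) set" where
  "point_modules _ n d = {a. FK_point_module n d a}"

end

theory Submission
  imports Defs
begin

(* Let e_0, e_1, e_2 be the chosen basis vectors of M_0, M_1, M_2 and write p g and q g for the
   scalars by which a generator x_g acts M_0 -> M_1 and M_1 -> M_2. Generation in degree 0
   forces both p and q to be nonzero. Applying the quadratic relations of E_n to e_0 yields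
   bilinear equations in (p, q), and these force q h = 0 as soon as p g is nonzero for some g:
   for h = g by x_g^2 = 0, for disjoint g, h by commutativity, and for g, h sharing an index by
   the three-term relations on the triangle spanned by g and h. *)

lemma gen_by_deg0_vanishes:
  assumes "\<forall>g. FK_gen n g \<longrightarrow> a g m = 0"
    and "v \<in> gen_by_deg0 n d a"
  shows "v (Suc m) = 0"
  using assms(2)
proof (induction v rule: gen_by_deg0.induct)
  case (step g v)
  then have "a g m = 0" using assms(1) by blast
  then show ?case by (simp add: act_def)
qed simp_all

lemma FK_point_module_act_nonzero:
  assumes "FK_point_module n d a" and "m < d"
  obtains g where "FK_gen n g" and "a g m \<noteq> 0"
proof -
  define v :: "nat \<Rightarrow> 'a" where "v k = (if k = Suc m then 1 else 0)" for k
  have "supp_le d v" using assms(2) by (simp add: supp_le_def v_def)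
  then have "v \<in> gen_by_deg0 n d a" using assms(1) by (simp add: FK_point_module_def)
  moreover have "v (Suc m) \<noteq> 0" by (simp add: v_def)
  ultimately show thesis using gen_by_deg0_vanishes that by blast
qed

(* The equations obtained by applying the relations of E_n to e_0 and reading off the
   coefficient of e_2: a relation  \<Sum> c x_g x_h  becomes  \<Sum> c q g p h = 0. *)
definition FK_degree2_relations :: "nat \<Rightarrow> (nat \<times> nat \<Rightarrow> 'k::field) \<Rightarrow> (nat \<times> nat \<Rightarrow> 'k) \<Rightarrow> bool"
  where "FK_degree2_relations n p q \<longleftrightarrow>
    (\<forall>i j. 1 \<le> i \<and> i < j \<and> j \<le> n \<longrightarrow> q (i,j) * p (i,j) = 0) \<and>
    (\<forall>i j k l. 1 \<le> i \<and> i < j \<and> j \<le> n \<and> 1 \<le> k \<and> k < l \<and> l \<le> n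
        \<and> {i,j} \<inter> {k,l} = {} \<longrightarrow> q (i,j) * p (k,l) = q (k,l) * p (i,j)) \<and>
    (\<forall>i j k. 1 \<le> i \<and> i < j \<and> j < k \<and> k \<le> n \<longrightarrow>
        q (i,j) * p (j,k) = q (j,k) * p (i,k) + q (i,k) * p (i,j) \<and>
        q (j,k) * p (i,j) = q (i,k) * p (j,k) + q (i,j) * p (i,k))"

lemma
  assumes "FK_degree2_relations n p q"
  shows FK_degree2_square: "\<lbrakk>1 \<le> i; i < j; j \<le> n\<rbrakk> \<Longrightarrow> q (i,j) * p (i,j) = 0"
    and FK_degree2_commute: "\<lbrakk>1 \<le> i; i < j; j \<le> n; 1 \<le> k; k < l; l \<le> n; {i,j} \<inter> {k,l} = {}\<rbrakk>
      \<Longrightarrow> q (i,j) * p (k,l) = q (k,l) * p (i,j)"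
    and FK_degree2_three_term: "\<lbrakk>1 \<le> i; i < j; j < k; k \<le> n\<rbrakk> \<Longrightarrow>
      q (i,j) * p (j,k) = q (j,k) * p (i,k) + q (i,k) * p (i,j)"
    and FK_degree2_three_term': "\<lbrakk>1 \<le> i; i < j; j < k; k \<le> n\<rbrakk> \<Longrightarrow>
      q (j,k) * p (i,j) = q (i,k) * p (j,k) + q (i,j) * p (i,k)"
  using assms unfolding FK_degree2_relations_def by blast+

lemma act_act_deg0_unit_coeff2:
  assumes "2 \<le> d"
  shows "act a d g (act a d h (\<lambda>m. if m = 0 then 1 else 0)) 2 = a g 1 * a h 0"
  using assms by (simp add: act_def)

lemma FK_relations_degree2:
  assumes "FK_relations n d a" and "2 \<le> d"
  shows "FK_degree2_relations n (\<lambda>g. a g 0) (\<lambda>g. a g 1)"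
proof -
  let ?e0 = "\<lambda>m. if m = 0 then 1 else 0"
  have "supp_le d ?e0" by (simp add: supp_le_def)
  note rel = assms(1)[unfolded FK_relations_def, rule_format, OF this]
  note at_2 = act_act_deg0_unit_coeff2[OF assms(2)]
  show ?thesis
    unfolding FK_degree2_relations_def
  proof (intro conjI allI impI)
    fix i j assume "1 \<le> i \<and> i < j \<and> j \<le> n"
    then show "a (i,j) 1 * a (i,j) 0 = 0"
      using conjunct1[OF rel, rule_format, of i j 2] by (simp add: at_2)
  next
    fix i j k l
    assume "1 \<le> i \<and> i < j \<and> j \<le> n \<and> 1 \<le> k \<and> k < l \<and> l \<le> n \<and> {i,j} \<inter> {k,l} = {}"
    then show "a (i,j) 1 * a (k,l) 0 = a (k,l) 1 * a (i,j) 0"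
      using conjunct1[OF conjunct2[OF rel], rule_format, of i j k l 2] by (simp add: at_2)
  next
    fix i j k assume ijk: "1 \<le> i \<and> i < j \<and> j < k \<and> k \<le> n"
    note three_term = conjunct2[OF conjunct2[OF rel], rule_format, OF ijk]
    show "a (i,j) 1 * a (j,k) 0 = a (j,k) 1 * a (i,k) 0 + a (i,k) 1 * a (i,j) 0"
      using conjunct1[OF three_term, rule_format, of 2] by (simp add: at_2 algebra_simps)
    show "a (j,k) 1 * a (i,j) 0 = a (i,k) 1 * a (j,k) 0 + a (i,j) 1 * a (i,k) 0"
      using conjunct2[OF three_term, rule_format, of 2] by (simp add: at_2 algebra_simps)
  qed
qed

lemma triangle_relations_vanish_if_p_ij_or_p_ik:
  fixes pij pik pjk qij qik qjk :: "'k::field"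
  assumes "qij * pij = 0" "qik * pik = 0" "qjk * pjk = 0"
    and "qij * pjk = qjk * pik + qik * pij" "qjk * pij = qik * pjk + qij * pik"
    and "pij \<noteq> 0 \<or> pik \<noteq> 0"
  shows "qij = 0 \<and> qik = 0 \<and> qjk = 0"
proof (cases "pij \<noteq> 0")
  case True
  then have "qij = 0" using assms(1) by simp
  have "qik * (pik * pjk + pij * pij) = 0"
    using assms(4,5) \<open>qij = 0\<close> by algebra
  moreover have "pik * pjk + pij * pij \<noteq> 0" if "qik \<noteq> 0"
    using assms(2) that True by simp
  ultimately have "qik = 0" by auto
  then have "qjk * pij = 0" using assms(5) \<open>qij = 0\<close> by simp
  then show ?thesis using \<open>qij = 0\<close> \<open>qik = 0\<close> True by simp
next
  case False
  then have "pik \<noteq> 0" using assms(6) by simp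
  then have "qik = 0" using assms(2) by simp
  have "qij * pik = 0" if "qij \<noteq> 0"
    using assms(1,5) \<open>qik = 0\<close> that by simp
  then have "qij = 0" using \<open>pik \<noteq> 0\<close> by auto
  then have "qjk * pik = 0" using assms(4) \<open>qik = 0\<close> by simp
  then show ?thesis using \<open>qij = 0\<close> \<open>qik = 0\<close> \<open>pik \<noteq> 0\<close> by simp
qed

lemma triangle_relations_vanish:
  fixes pij pik pjk qij qik qjk :: "'k::field"
  assumes "qij * pij = 0" "qik * pik = 0" "qjk * pjk = 0"
    and "qij * pjk = qjk * pik + qik * pij" "qjk * pij = qik * pjk + qij * pik"
    and "pij \<noteq> 0 \<or> pik \<noteq> 0 \<or> pjk \<noteq> 0"
  shows "qij = 0 \<and> qik = 0 \<and> qjk = 0"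
proof (cases "pij \<noteq> 0 \<or> pik \<noteq> 0")
  case True
  then show ?thesis using triangle_relations_vanish_if_p_ij_or_p_ik assms(1-5) by blast
next
  case False
  (* the relations are symmetric under exchanging (pij, qij) with (pjk, qjk) *)
  then show ?thesis
    using triangle_relations_vanish_if_p_ij_or_p_ik[of qjk pjk qik pik qij pij] assms by auto
qed

lemma FK_degree2_relations_triangle:
  assumes "FK_degree2_relations n p q" and "1 \<le> i" "i < j" "j < k" "k \<le> n"
    and "g \<in> {(i,j), (i,k), (j,k)}" "p g \<noteq> 0" "h \<in> {(i,j), (i,k), (j,k)}"
  shows "q h = 0"
proof -
  have "q (i,j) = 0 \<and> q (i,k) = 0 \<and> q (j,k) = 0"
  proof (rule triangle_relations_vanish)
    show "q (i,j) * p (i,j) = 0" "q (i,k) * p (i,k) = 0" "q (j,k) * p (j,k) = 0"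
      using FK_degree2_square[OF assms(1)] assms(2-5) by simp_all
    show "q (i,j) * p (j,k) = q (j,k) * p (i,k) + q (i,k) * p (i,j)"
      by (rule FK_degree2_three_term[OF assms(1-5)])
    show "q (j,k) * p (i,j) = q (i,k) * p (j,k) + q (i,j) * p (i,k)"
      by (rule FK_degree2_three_term'[OF assms(1-5)])
    show "p (i,j) \<noteq> 0 \<or> p (i,k) \<noteq> 0 \<or> p (j,k) \<noteq> 0"
      using assms(6,7) by auto
  qed
  then show ?thesis using assms(8) by auto
qed

lemma pairs_sharing_index_span_triangle:
  fixes i j k l :: nat
  assumes "i < j" "k < l" "(i,j) \<noteq> (k,l)" "{i,j} \<inter> {k,l} \<noteq> {}"
  obtains x y z where "x < y" "y < z" "{x,y,z} = {i,j,k,l}"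
    "(i,j) \<in> {(x,y), (x,z), (y,z)}" "(k,l) \<in> {(x,y), (x,z), (y,z)}"
proof -
  consider "i = k" "j < l" | "i = k" "l < j" | "j = l" "i < k" | "j = l" "k < i" | "i = l" | "j = k"
    using assms(3,4) by (auto simp: linorder_neq_iff)
  then show thesis
  proof cases
    case 1 then show ?thesis using assms by (intro that[of i j l]) auto
  next
    case 2 then show ?thesis using assms by (intro that[of i l j]) auto
  next
    case 3 then show ?thesis using assms by (intro that[of i k j]) auto
  next
    case 4 then show ?thesis using assms by (intro that[of k i j]) auto
  next
    case 5 then show ?thesis using assms by (intro that[of k i j]) auto
  next
    case 6 then show ?thesis using assms by (intro that[of i j l]) auto
  qed
qed

lemma FK_degree2_relations_vanish:
  assumes rel: "FK_degree2_relations n p q"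
    and "FK_gen n g" "p g \<noteq> 0" and "FK_gen n h"
  shows "q h = 0"
proof -
  obtain i j k l where g: "g = (i,j)" and h: "h = (k,l)" by fastforce
  have ij: "1 \<le> i" "i < j" "j \<le> n" and kl: "1 \<le> k" "k < l" "l \<le> n"
    using assms(2,4) g h by (auto simp: FK_gen_def)
  have "q g = 0" using FK_degree2_square[OF rel ij] assms(3) g by simp
  consider "g = h" | "{i,j} \<inter> {k,l} = {}" | "g \<noteq> h" "{i,j} \<inter> {k,l} \<noteq> {}" by blast
  then show ?thesis
  proof cases
    case 1
    then show ?thesis using \<open>q g = 0\<close> by simp
  next
    case 2
    then have "q h * p g = q g * p h"
      using FK_degree2_commute[OF rel kl ij] g h 2 by blast
    then show ?thesis using \<open>q g = 0\<close> assms(3) by simp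
  next
    case 3
    then obtain x y z where "x < y" "y < z" "{x,y,z} = {i,j,k,l}"
      and "g \<in> {(x,y), (x,z), (y,z)}" "h \<in> {(x,y), (x,z), (y,z)}"
      using pairs_sharing_index_span_triangle ij(2) kl(2) g h by metis
    moreover have "x \<in> {i,j,k,l}" "z \<in> {i,j,k,l}"
      using \<open>{x,y,z} = {i,j,k,l}\<close> by blast+
    then have "1 \<le> x" "z \<le> n" using ij kl by auto
    ultimately show ?thesis
      using FK_degree2_relations_triangle[OF rel] assms(3) by blast
  qed
qed

theorem theorem1p1:
  fixes n d :: nat
  assumes "alg_closed TYPE('k::field)"
    and "n \<ge> 3"
    and "d \<ge> 2"
  shows "point_modules TYPE('k) n d = {}"
proof -
  have "\<not> FK_point_module n d a" for a :: "nat \<times> nat \<Rightarrow> nat \<Rightarrow> 'k"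
  proof
    assume pm: "FK_point_module n d a"
    obtain g where g: "FK_gen n g" "a g 0 \<noteq> 0"
      using FK_point_module_act_nonzero[OF pm, where m = 0] assms(3) by auto
    obtain h where h: "FK_gen n h" "a h 1 \<noteq> 0"
      using FK_point_module_act_nonzero[OF pm, where m = 1] assms(3) by auto
    have "FK_degree2_relations n (\<lambda>g. a g 0) (\<lambda>g. a g 1)"
      using pm assms(3) FK_relations_degree2 unfolding FK_point_module_def by blast
    with g h show False using FK_degree2_relations_vanish by metis
  qed
  then show ?thesis by (simp add: point_modules_def)
qed

end
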